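(* Let $n$ be an integer, let $\mathfrak{M}=(S,\mathcal{L})$ be a $\big(\binom{n+1}{2}_{\,n-1}\ \binom{n+1}{3}_{\,3}\big)$-configuration, and let $X\subseteq S$ with $|X|=n$ be such that $\mathfrak{M}$ freely contains the complete graph $K_X$. Let $Y=S\setminus X$ (the point set of the subconfiguration complementary to $K_X$). Then $Y$ is a hyperplane of $\mathfrak{M}$.
   Context: A $(v_r\ b_k)$-configuration is a partial linear space (two distinct points lie on at most one line) with $v$ points and $b$ lines, each point on exactly $r$ lines and each line containing exactly $k$ points. For distinct collinear points $a_1,a_2$ let $\overline{a_1a_2}$ denote the line through them. $\mathfrak{M}$ freely contains the complete graph $K_X$ ($X\subseteq S$) iff any two distinct points of $X$ are collinear, no three points of $X$ lie on a common line, and for any disjoint $2$-subsets $\{a_1,a_2\},\{b_1,b_2\}$ of $X$ the lines $\overline{a_1a_2}$ and $\overline{b_1b_2}$ are disjoint. A subspace is a set of points containing every line that meets it in at least two points; a hyperplane is a proper subspace meeting every line. *)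

theory Defs
  imports Main
begin

definition partial_linear_space :: "'a set \<Rightarrow> 'a set set \<Rightarrow> bool" where
  "partial_linear_space S L \<longleftrightarrow>
     (\<forall>l\<in>L. l \<subseteq> S) \<and>
     (\<forall>l1\<in>L. \<forall>l2\<in>L. \<forall>a b. a \<noteq> b \<and> a \<in> l1 \<and> b \<in> l1 \<and> a \<in> l2 \<and> b \<in> l2 \<longrightarrow> l1 = l2)"

definition configuration :: "'a set \<Rightarrow> 'a set set \<Rightarrow> nat \<Rightarrow> nat \<Rightarrow> nat \<Rightarrow> nat \<Rightarrow> bool" where
  "configuration S L v r b k \<longleftrightarrow>
     partial_linear_space S L \<and> finite S \<and> finite L \<and>
     card S = v \<and> card L = b \<and>
     (\<forall>p\<in>S. card {l\<in>L. p \<in> l} = r) \<and>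
     (\<forall>l\<in>L. card l = k)"

definition line_through :: "'a set set \<Rightarrow> 'a \<Rightarrow> 'a \<Rightarrow> 'a set" where
  "line_through L a b = (THE l. l \<in> L \<and> a \<in> l \<and> b \<in> l)"

definition freely_contains_complete_graph :: "'a set \<Rightarrow> 'a set set \<Rightarrow> 'a set \<Rightarrow> bool" where
  "freely_contains_complete_graph S L X \<longleftrightarrow>
     X \<subseteq> S \<and>
     (\<forall>a\<in>X. \<forall>b\<in>X. a \<noteq> b \<longrightarrow> (\<exists>l\<in>L. a \<in> l \<and> b \<in> l)) \<and>
     (\<forall>l\<in>L. \<not> (\<exists>a\<in>X. \<exists>b\<in>X. \<exists>c\<in>X. a \<noteq> b \<and> a \<noteq> c \<and> b \<noteq> c \<and> a \<in> l \<and> b \<in> l \<and> c \<in> l)) \<and>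
     (\<forall>a1\<in>X. \<forall>a2\<in>X. \<forall>b1\<in>X. \<forall>b2\<in>X.
        a1 \<noteq> a2 \<and> b1 \<noteq> b2 \<and> {a1, a2} \<inter> {b1, b2} = {} \<longrightarrow>
        line_through L a1 a2 \<inter> line_through L b1 b2 = {})"

definition subspace :: "'a set \<Rightarrow> 'a set set \<Rightarrow> 'a set \<Rightarrow> bool" where
  "subspace S L Z \<longleftrightarrow> Z \<subseteq> S \<and>
     (\<forall>l\<in>L. (\<exists>a\<in>l. \<exists>b\<in>l. a \<noteq> b \<and> a \<in> Z \<and> b \<in> Z) \<longrightarrow> l \<subseteq> Z)"

definition hyperplane :: "'a set \<Rightarrow> 'a set set \<Rightarrow> 'a set \<Rightarrow> bool" where
  "hyperplane S L Z \<longleftrightarrow> subspace S L Z \<and> Z \<noteq> S \<and> (\<forall>l\<in>L. l \<inter> Z \<noteq> {})"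

end

theory Submission
  imports Defs
begin

text \<open>Through a point x of X there pass exactly n - 1 lines, and the n - 1 lines joining x to
  the other points of X are pairwise distinct because no three points of X are collinear. Hence
  every line through a point of X contains a second point of X. A line has only three points, so
  a line with two points outside X lies outside X, i.e. S - X is a subspace; and no line lies
  inside X, so S - X meets every line.\<close>

definition pairwise_collinear :: "'a set set \<Rightarrow> 'a set \<Rightarrow> bool" where
  "pairwise_collinear L X \<longleftrightarrow> (\<forall>a\<in>X. \<forall>b\<in>X. a \<noteq> b \<longrightarrow> (\<exists>l\<in>L. a \<in> l \<and> b \<in> l))"

definition no_three_collinear :: "'a set set \<Rightarrow> 'a set \<Rightarrow> bool" where
  "no_three_collinear L X \<longleftrightarrow>
     (\<forall>l\<in>L. \<not> (\<exists>a\<in>X. \<exists>b\<in>X. \<exists>c\<in>X. a \<noteq> b \<and> a \<noteq> c \<and> b \<noteq> c \<and> a \<in> l \<and> b \<in> l \<and> c \<in> l))"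

lemma freely_contains_complete_graphD:
  assumes "freely_contains_complete_graph S L X"
  shows "pairwise_collinear L X" and "no_three_collinear L X"
  using assms
  unfolding freely_contains_complete_graph_def pairwise_collinear_def no_three_collinear_def
  by auto

lemma line_through_eq:
  assumes "partial_linear_space S L" and "l \<in> L" and "a \<noteq> b" and "a \<in> l" and "b \<in> l"
  shows "line_through L a b = l"
  unfolding line_through_def
proof (rule the_equality)
  show "l \<in> L \<and> a \<in> l \<and> b \<in> l" using assms by blast
  show "m = l" if "m \<in> L \<and> a \<in> m \<and> b \<in> m" for m
    using assms that unfolding partial_linear_space_def by blast
qed

lemma line_through_in_lines:
  assumes "partial_linear_space S L" and "a \<noteq> b" and "l \<in> L" and "a \<in> l" and "b \<in> l"
  shows "line_through L a b \<in> L" "a \<in> line_through L a b" "b \<in> line_through L a b"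
  using line_through_eq[OF assms(1,3,2,4,5)] assms by auto

lemma lines_through_clique_point:
  assumes pls: "partial_linear_space S L" and "finite L" and "finite X"
    and coll: "pairwise_collinear L X" and no3: "no_three_collinear L X"
    and x: "x \<in> X" and few: "card {l\<in>L. x \<in> l} \<le> card X - 1"
  shows "{l\<in>L. x \<in> l} = line_through L x ` (X - {x})"
proof -
  have joining: "line_through L x y \<in> L \<and> x \<in> line_through L x y \<and> y \<in> line_through L x y"
    if "y \<in> X - {x}" for y
    using coll x that line_through_in_lines[OF pls] unfolding pairwise_collinear_def by (metis DiffE singletonI)
  have "inj_on (line_through L x) (X - {x})"
  proof (rule inj_onI)
    fix y y' assume y: "y \<in> X - {x}" and y': "y' \<in> X - {x}"
      and "line_through L x y = line_through L x y'"
    then show "y = y'"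
      using joining[OF y] joining[OF y'] no3 x unfolding no_three_collinear_def by blast
  qed
  then have "card (line_through L x ` (X - {x})) = card X - 1"
    using card_image x \<open>finite X\<close> by fastforce
  moreover have "line_through L x ` (X - {x}) \<subseteq> {l\<in>L. x \<in> l}"
    using joining by blast
  moreover have "finite {l\<in>L. x \<in> l}"
    using \<open>finite L\<close> by simp
  ultimately show ?thesis
    using card_seteq few by (metis (no_types, lifting))
qed

corollary line_through_clique_point_meets_clique:
  assumes "partial_linear_space S L" and "finite L" and "finite X"
    and "pairwise_collinear L X" and "no_three_collinear L X"
    and "x \<in> X" and "card {l\<in>L. x \<in> l} \<le> card X - 1"
    and "l \<in> L" and "x \<in> l"
  shows "\<exists>y\<in>X. y \<noteq> x \<and> y \<in> l"
proof -
  have "l \<in> line_through L x ` (X - {x})"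
    using lines_through_clique_point[OF assms(1-7)] assms(8,9) by blast
  then obtain y where y: "y \<in> X" "x \<noteq> y" and l: "l = line_through L x y" by blast
  obtain m where "m \<in> L" "x \<in> m" "y \<in> m"
    using assms(4,6) y unfolding pairwise_collinear_def by blast
  then have "y \<in> l"
    unfolding l by (rule line_through_in_lines(3)[OF assms(1) \<open>x \<noteq> y\<close>])
  with y show ?thesis by auto
qed

lemma complement_subspace_if_lines_meet_twice:
  assumes lines_in_S: "\<forall>l\<in>L. l \<subseteq> S" and three: "\<forall>l\<in>L. card l = 3"
    and twice: "\<And>x l. x \<in> X \<Longrightarrow> l \<in> L \<Longrightarrow> x \<in> l \<Longrightarrow> \<exists>y\<in>X. y \<noteq> x \<and> y \<in> l"
  shows "subspace S L (S - X)"
  unfolding subspace_def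
proof (intro conjI ballI impI subsetI)
  fix l z assume l: "l \<in> L" and "\<exists>a\<in>l. \<exists>b\<in>l. a \<noteq> b \<and> a \<in> S - X \<and> b \<in> S - X" and z: "z \<in> l"
  then obtain a b where ab: "a \<in> l" "b \<in> l" "a \<noteq> b" "a \<notin> X" "b \<notin> X" by auto
  show "z \<in> S - X"
  proof (rule ccontr)
    assume "z \<notin> S - X"
    then have "z \<in> X" using z l lines_in_S by auto
    then obtain y where y: "y \<in> X" "y \<noteq> z" "y \<in> l" using twice l z by blast
    have "a \<noteq> y" "a \<noteq> z" "b \<noteq> y" "b \<noteq> z" using ab y \<open>z \<in> X\<close> by auto
    then have "card {a, b, y, z} = 4" using ab(3) y(2) by auto
    moreover have "{a, b, y, z} \<subseteq> l" using ab y z by auto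
    moreover have "finite l" using three l by (metis card.infinite zero_neq_numeral)
    ultimately have "4 \<le> card l" by (metis card_mono)
    then show False using three l by auto
  qed
qed simp

lemma complement_meets_lines:
  assumes "\<forall>l\<in>L. l \<subseteq> S" and "\<forall>l\<in>L. card l = 3" and "no_three_collinear L X" and l: "l \<in> L"
  shows "l \<inter> (S - X) \<noteq> {}"
proof
  assume "l \<inter> (S - X) = {}"
  then have "l \<subseteq> X" using assms(1) l by auto
  have "card l = 3" using assms(2) l by blast
  then obtain a b c where abc: "l = {a, b, c}" "a \<noteq> b" "a \<noteq> c" "b \<noteq> c"
    by (metis card_3_iff)
  then have "\<exists>a\<in>X. \<exists>b\<in>X. \<exists>c\<in>X. a \<noteq> b \<and> a \<noteq> c \<and> b \<noteq> c \<and> a \<in> l \<and> b \<in> l \<and> c \<in> l"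
    using \<open>l \<subseteq> X\<close> by auto
  with assms(3) l show False
    unfolding no_three_collinear_def by blast
qed

theorem proposition1p7:
  fixes S :: "'a set" and L :: "'a set set" and X :: "'a set" and n :: nat
  assumes "n \<ge> 1"
    and "configuration S L ((n + 1) choose 2) (n - 1) ((n + 1) choose 3) 3"
    and "X \<subseteq> S" and "card X = n"
    and "freely_contains_complete_graph S L X"
  shows "hyperplane S L (S - X)"
proof -
  have pls: "partial_linear_space S L" and "finite S" and "finite L"
    and degree: "\<forall>p\<in>S. card {l\<in>L. p \<in> l} = n - 1" and three: "\<forall>l\<in>L. card l = 3"
    using assms(2) unfolding configuration_def by auto
  have lines_in_S: "\<forall>l\<in>L. l \<subseteq> S" using pls unfolding partial_linear_space_def by auto
  have "finite X" using assms(3) \<open>finite S\<close> finite_subset by blast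
  note coll = freely_contains_complete_graphD(1)[OF assms(5)]
    and no3 = freely_contains_complete_graphD(2)[OF assms(5)]
  have "\<exists>y\<in>X. y \<noteq> x \<and> y \<in> l" if "x \<in> X" "l \<in> L" "x \<in> l" for x l
  proof (rule line_through_clique_point_meets_clique[OF pls \<open>finite L\<close> \<open>finite X\<close> coll no3 that(1) _ that(2,3)])
    show "card {l\<in>L. x \<in> l} \<le> card X - 1"
      using degree assms(3,4) that(1) by auto
  qed
  then have "subspace S L (S - X)"
    by (rule complement_subspace_if_lines_meet_twice[OF lines_in_S three])
  moreover have "S - X \<noteq> S"
  proof -
    have "X \<noteq> {}" using assms(1,4) by auto
    then show ?thesis using assms(3) by blast
  qed
  moreover have "\<forall>l\<in>L. l \<inter> (S - X) \<noteq> {}"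
    using complement_meets_lines[OF lines_in_S three no3] by blast
  ultimately show ?thesis unfolding hyperplane_def by blast
qed

end
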